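(* Let $A$ and $B$ be $k$-algebras and $\tau\colon B\otimes A\to A\otimes B$ a twisting map, and equip $A$, $B$ and $A\otimes_\tau B$ with their cofinite topologies. Consider the conditions: (i) $\tau\colon B\otimes^! A\to A\otimes^! B$ is continuous; (ii) the identity-on-$A\otimes B$ map $A\otimes^! B\to A\otimes_\tau B$ is a homeomorphism; (iii) there exist neighborhood bases of zero $\{I_\alpha\}\subseteq\mathcal F(A)$ and $\{J_\beta\}\subseteq\mathcal F(B)$ such that $\tau(B\otimes I_\alpha)\subseteq I_\alpha\otimes B$ and $\tau(J_\beta\otimes A)\subseteq A\otimes J_\beta$ for all $\alpha,\beta$. Then (i) and (ii) are equivalent, and (iii) implies (i).
   Context: $k$ is a field (discrete topology); algebras are unital associative. For an algebra $R$, $\mathcal F(R)$ is the set of two-sided ideals of finite codimension, and the cofinite topology on $R$ is the linear topology whose open subspaces are those containing some element of $\mathcal F(R)$ (so $\mathcal F(R)$ is a neighborhood basis of zero, and a subfamily is a neighborhood basis of zero if every element of $\mathcal F(R)$ contains a member of it). For linearly topologized spaces $E,F$, $E\otimes^!F$ is $E\otimes F$ with the linear topology whose open subspaces are those containing $E_0\otimes F+E\otimes F_0$ for some open subspaces $E_0\subseteq E$, $F_0\subseteq F$. A linear map $\tau\colon B\otimes A\to A\otimes B$ is a twisting map if the multiplication $m_\tau=(m_A\otimes m_B)\circ(\mathrm{id}_A\otimes\tau\otimes\mathrm{id}_B)$ on $A\otimes B$ is associative with identity $1_A\otimes1_B$; the resulting algebra is the twisted tensor product $A\otimes_\tau B$.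 *)

theory Defs
  imports "HOL-Analysis.Analysis"
begin

text \<open>Vector spaces over a field 'k are given by a scalar multiplication on an
  ab_group_add type (library locale vector_space).\<close>

definition k_algebra :: "('k::field \<Rightarrow> 'a::ring_1 \<Rightarrow> 'a) \<Rightarrow> bool" where
  "k_algebra s \<longleftrightarrow> vector_space s \<and>
     (\<forall>c x y. s c (x * y) = s c x * y \<and> s c (x * y) = x * s c y)"

definition bilinear_map ::
  "('k::field \<Rightarrow> 'a::ab_group_add \<Rightarrow> 'a) \<Rightarrow> ('k \<Rightarrow> 'b::ab_group_add \<Rightarrow> 'b)
   \<Rightarrow> ('k \<Rightarrow> 'c::ab_group_add \<Rightarrow> 'c) \<Rightarrow> ('a \<Rightarrow> 'b \<Rightarrow> 'c) \<Rightarrow> bool" where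
  "bilinear_map sA sB sC f \<longleftrightarrow>
     (\<forall>b. Vector_Spaces.linear sA sC (\<lambda>a. f a b)) \<and> (\<forall>a. Vector_Spaces.linear sB sC (f a))"

definition is_tensor_product ::
  "('k::field \<Rightarrow> 'a::ab_group_add \<Rightarrow> 'a) \<Rightarrow> ('k \<Rightarrow> 'b::ab_group_add \<Rightarrow> 'b)
   \<Rightarrow> ('k \<Rightarrow> 't::ab_group_add \<Rightarrow> 't) \<Rightarrow> ('a \<Rightarrow> 'b \<Rightarrow> 't) \<Rightarrow> bool" where
  "is_tensor_product sA sB sT t \<longleftrightarrow>
     vector_space sA \<and> vector_space sB \<and> vector_space sT \<and>
     bilinear_map sA sB sT t \<and>
     module.span sT (range (case_prod t)) = UNIV \<and>
     (\<forall>\<beta>::'a \<Rightarrow> 'b \<Rightarrow> 'k. bilinear_map sA sB (*) \<beta> \<longrightarrow>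
        (\<exists>g. Vector_Spaces.linear sT (*) g \<and> (\<forall>a b. g (t a b) = \<beta> a b)))"

text \<open>The subspace E0 \<otimes> F0 of E \<otimes> F (image of E0 \<otimes> F0, a subspace since k is a field).\<close>
definition tensor_sub ::
  "('k::field \<Rightarrow> 't::ab_group_add \<Rightarrow> 't) \<Rightarrow> ('a \<Rightarrow> 'b \<Rightarrow> 't) \<Rightarrow> 'a set \<Rightarrow> 'b set \<Rightarrow> 't set" where
  "tensor_sub sT t E0 F0 = module.span sT {t x y | x y. x \<in> E0 \<and> y \<in> F0}"

definition linear_topology :: "'v::ab_group_add set set \<Rightarrow> 'v topology" where
  "linear_topology \<N> = topology (\<lambda>U. \<forall>x\<in>U. \<exists>N\<in>\<N>. (\<lambda>v. x + v) ` N \<subseteq> U)"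

definition fin_codim_ideals ::
  "('k::field \<Rightarrow> 'v::ab_group_add \<Rightarrow> 'v) \<Rightarrow> ('v \<Rightarrow> 'v \<Rightarrow> 'v) \<Rightarrow> 'v set set" where
  "fin_codim_ideals s m = {I. module.subspace s I \<and>
       (\<forall>x\<in>I. \<forall>r. m r x \<in> I \<and> m x r \<in> I) \<and>
       (\<exists>F. finite F \<and> module.span s (I \<union> F) = UNIV)}"

definition cofinite_topology ::
  "('k::field \<Rightarrow> 'v::ab_group_add \<Rightarrow> 'v) \<Rightarrow> ('v \<Rightarrow> 'v \<Rightarrow> 'v) \<Rightarrow> 'v topology" where
  "cofinite_topology s m = linear_topology (fin_codim_ideals s m)"

definition tensor_shriek_topology ::
  "('k::field \<Rightarrow> 'a::ab_group_add \<Rightarrow> 'a) \<Rightarrow> ('k \<Rightarrow> 'b::ab_group_add \<Rightarrow> 'b)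
   \<Rightarrow> ('k \<Rightarrow> 't::ab_group_add \<Rightarrow> 't) \<Rightarrow> ('a \<Rightarrow> 'b \<Rightarrow> 't)
   \<Rightarrow> 'a topology \<Rightarrow> 'b topology \<Rightarrow> 't topology" where
  "tensor_shriek_topology sA sB sT t TA TB = linear_topology
     {tensor_sub sT t E0 UNIV + tensor_sub sT t UNIV F0 | E0 F0.
        module.subspace sA E0 \<and> openin TA E0 \<and> module.subspace sB F0 \<and> openin TB F0}"

text \<open>mt is the multiplication m_tau = (m_A \<otimes> m_B)(id \<otimes> tau \<otimes> id) on A \<otimes> B:
  the bilinear map with (a\<otimes>b)(a'\<otimes>b') = \<Sum> a x_i \<otimes> y_i b' whenever
  tau(b\<otimes>a') = \<Sum> x_i \<otimes> y_i.\<close>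
definition is_twisted_mult ::
  "('k::field \<Rightarrow> 'ab::ab_group_add \<Rightarrow> 'ab) \<Rightarrow> ('a::ring_1 \<Rightarrow> 'b::ring_1 \<Rightarrow> 'ab)
   \<Rightarrow> ('b \<Rightarrow> 'a \<Rightarrow> 'ba) \<Rightarrow> ('ba \<Rightarrow> 'ab) \<Rightarrow> ('ab \<Rightarrow> 'ab \<Rightarrow> 'ab) \<Rightarrow> bool" where
  "is_twisted_mult sAB tAB tBA \<tau> mt \<longleftrightarrow>
     bilinear_map sAB sAB sAB mt \<and>
     (\<forall>a b a' b' (I::nat set) x y. finite I \<longrightarrow>
        \<tau> (tBA b a') = (\<Sum>i\<in>I. tAB (x i) (y i)) \<longrightarrow>
        mt (tAB a b) (tAB a' b') = (\<Sum>i\<in>I. tAB (a * x i) (y i * b')))"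

definition is_twisting_map ::
  "('k::field \<Rightarrow> 'ba::ab_group_add \<Rightarrow> 'ba) \<Rightarrow> ('k \<Rightarrow> 'ab::ab_group_add \<Rightarrow> 'ab)
   \<Rightarrow> ('a::ring_1 \<Rightarrow> 'b::ring_1 \<Rightarrow> 'ab)
   \<Rightarrow> ('b \<Rightarrow> 'a \<Rightarrow> 'ba) \<Rightarrow> ('ba \<Rightarrow> 'ab) \<Rightarrow> ('ab \<Rightarrow> 'ab \<Rightarrow> 'ab) \<Rightarrow> bool" where
  "is_twisting_map sBA sAB tAB tBA \<tau> mt \<longleftrightarrow>
     Vector_Spaces.linear sBA sAB \<tau> \<and>
     is_twisted_mult sAB tAB tBA \<tau> mt \<and>
     (\<forall>x y z. mt (mt x y) z = mt x (mt y z)) \<and>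
     (\<forall>x. mt (tAB 1 1) x = x \<and> mt x (tAB 1 1) = x)"

end

theory Submission
  imports Defs
begin

text \<open>Both topologies on \<open>A \<otimes> B\<close> are linear. The neighbourhoods \<open>I \<otimes> B + A \<otimes> J\<close>
  (\<open>I \<in> \<F>(A)\<close>, \<open>J \<in> \<F>(B)\<close>) form a basis of \<open>A \<otimes>\<^sup>! B\<close>, and every \<open>K \<in> \<F>(A \<otimes>\<^sub>\<tau> B)\<close>
  contains such a neighbourhood, namely the one built from the preimages of \<open>K\<close> under
  \<open>a \<mapsto> a \<otimes> 1\<close> and \<open>b \<mapsto> 1 \<otimes> b\<close>. So (ii) says that each \<open>W = I \<otimes> B + A \<otimes> J\<close>
  contains some \<open>K\<close>, and (i) that \<open>\<tau>\<close> maps some \<open>J' \<otimes> A + B \<otimes> I'\<close> into \<open>W\<close>.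

  Since \<open>\<tau>(b \<otimes> a) = (1 \<otimes> b)(a \<otimes> 1)\<close>, \<open>\<tau>\<close> maps the neighbourhood built from \<open>K\<close> into \<open>K\<close>,
  which gives (ii) \<open>\<Longrightarrow>\<close> (i). Conversely, if \<open>\<tau>(B \<otimes> I') \<subseteq> W\<close>, the identity
  \<open>(a \<otimes> b)(x \<otimes> y) = (a \<otimes> 1) \<tau>(b \<otimes> x) (1 \<otimes> y)\<close> shows that the largest left ideal contained
  in \<open>W\<close> contains \<open>I' \<otimes> B + A \<otimes> J\<close>; hence it has finite codimension, and a left ideal of
  finite codimension contains a two-sided one. Finally (iii) \<open>\<Longrightarrow>\<close> (i) is immediate.\<close>

section \<open>Linear topologies\<close>

definition linear_topology_base :: "'v::ab_group_add set set \<Rightarrow> bool" where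
  "linear_topology_base \<N> \<longleftrightarrow> \<N> \<noteq> {} \<and>
     (\<forall>N\<in>\<N>. 0 \<in> N \<and> (\<forall>x\<in>N. \<forall>y\<in>N. x + y \<in> N)) \<and>
     (\<forall>N1\<in>\<N>. \<forall>N2\<in>\<N>. \<exists>N\<in>\<N>. N \<subseteq> N1 \<inter> N2)"

lemma linear_topology_baseD:
  assumes "linear_topology_base \<N>"
  shows "\<N> \<noteq> {}" "N \<in> \<N> \<Longrightarrow> 0 \<in> N" "N \<in> \<N> \<Longrightarrow> x \<in> N \<Longrightarrow> y \<in> N \<Longrightarrow> x + y \<in> N"
    "N1 \<in> \<N> \<Longrightarrow> N2 \<in> \<N> \<Longrightarrow> \<exists>N\<in>\<N>. N \<subseteq> N1 \<inter> N2"
  using assms unfolding linear_topology_base_def by blast+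

lemma openin_linear_topology:
  assumes "linear_topology_base \<N>"
  shows "openin (linear_topology \<N>) U \<longleftrightarrow> (\<forall>x\<in>U. \<exists>N\<in>\<N>. (\<lambda>v. x + v) ` N \<subseteq> U)"
proof -
  have "istopology (\<lambda>U. \<forall>x\<in>U. \<exists>N\<in>\<N>. (\<lambda>v. x + v) ` N \<subseteq> U)"
    unfolding istopology_def
  proof (intro conjI allI impI ballI)
    fix S T x
    assume "\<forall>x\<in>S. \<exists>N\<in>\<N>. (+) x ` N \<subseteq> S" "\<forall>x\<in>T. \<exists>N\<in>\<N>. (+) x ` N \<subseteq> T"
      and "x \<in> S \<inter> T"
    then obtain N1 N2 where "N1 \<in> \<N>" "N2 \<in> \<N>" "(+) x ` N1 \<subseteq> S" "(+) x ` N2 \<subseteq> T"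
      by (meson IntD1 IntD2)
    moreover obtain N where "N \<in> \<N>" "N \<subseteq> N1 \<inter> N2"
      using linear_topology_baseD(4)[OF assms \<open>N1 \<in> \<N>\<close> \<open>N2 \<in> \<N>\<close>] by blast
    ultimately show "\<exists>N\<in>\<N>. (+) x ` N \<subseteq> S \<inter> T"
      by (intro bexI[of _ N]) (meson image_mono le_inf_iff order_trans)+
  next
    fix K x
    assume "\<forall>U\<in>K. \<forall>x\<in>U. \<exists>N\<in>\<N>. (+) x ` N \<subseteq> U" "x \<in> \<Union>K"
    then obtain U N where "U \<in> K" "N \<in> \<N>" "(+) x ` N \<subseteq> U"
      by (meson UnionE)
    then show "\<exists>N\<in>\<N>. (+) x ` N \<subseteq> \<Union>K"
      by (meson Union_upper bexI order_trans)
  qed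
  then show ?thesis
    unfolding linear_topology_def by simp
qed

lemma topspace_linear_topology:
  assumes "linear_topology_base \<N>"
  shows "topspace (linear_topology \<N>) = UNIV"
proof -
  have "openin (linear_topology \<N>) UNIV"
    using linear_topology_baseD(1)[OF assms] unfolding openin_linear_topology[OF assms] by blast
  then show ?thesis
    using openin_subset by blast
qed

lemma openin_linear_topology_base:
  assumes "linear_topology_base \<N>" "N \<in> \<N>"
  shows "openin (linear_topology \<N>) N"
  unfolding openin_linear_topology[OF assms(1)]
proof (intro ballI bexI[of _ N])
  fix x assume "x \<in> N"
  then show "(+) x ` N \<subseteq> N"
    using linear_topology_baseD(3)[OF assms] by blast
qed (rule assms(2))

lemma linear_topology_base_subset_open:
  assumes "linear_topology_base \<N>" "openin (linear_topology \<N>) U" "0 \<in> U"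
  shows "\<exists>N\<in>\<N>. N \<subseteq> U"
proof -
  obtain N where "N \<in> \<N>" "(+) 0 ` N \<subseteq> U"
    using assms(2,3) unfolding openin_linear_topology[OF assms(1)] by blast
  then show ?thesis
    by auto
qed

lemma continuous_map_linear_topology_iff:
  assumes base1: "linear_topology_base \<N>1" and base2: "linear_topology_base \<N>2"
    and add: "\<And>x y. f (x + y) = f x + f y"
  shows "continuous_map (linear_topology \<N>1) (linear_topology \<N>2) f \<longleftrightarrow>
    (\<forall>N2\<in>\<N>2. \<exists>N1\<in>\<N>1. f ` N1 \<subseteq> N2)"
proof
  assume cont: "continuous_map (linear_topology \<N>1) (linear_topology \<N>2) f"
  show "\<forall>N2\<in>\<N>2. \<exists>N1\<in>\<N>1. f ` N1 \<subseteq> N2"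
  proof
    fix N2 assume N2: "N2 \<in> \<N>2"
    have "openin (linear_topology \<N>1) (f -` N2)"
      using continuous_map_open[OF cont openin_linear_topology_base[OF base2 N2]]
      by (simp add: topspace_linear_topology[OF base1] vimage_def)
    moreover have "0 \<in> f -` N2"
      using add[of 0 0] linear_topology_baseD(2)[OF base2 N2] by simp
    ultimately obtain N1 where "N1 \<in> \<N>1" "N1 \<subseteq> f -` N2"
      using linear_topology_base_subset_open[OF base1] by meson
    then show "\<exists>N1\<in>\<N>1. f ` N1 \<subseteq> N2"
      by (meson image_subset_iff_subset_vimage)
  qed
next
  assume small: "\<forall>N2\<in>\<N>2. \<exists>N1\<in>\<N>1. f ` N1 \<subseteq> N2"
  show "continuous_map (linear_topology \<N>1) (linear_topology \<N>2) f"
    unfolding continuous_map_def topspace_linear_topology[OF base1] topspace_linear_topology[OF base2]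
  proof (intro conjI allI impI)
    fix U assume "openin (linear_topology \<N>2) U"
    then have U: "\<forall>x\<in>U. \<exists>N\<in>\<N>2. (+) x ` N \<subseteq> U"
      using openin_linear_topology[OF base2] by blast
    show "openin (linear_topology \<N>1) {x \<in> UNIV. f x \<in> U}"
      unfolding openin_linear_topology[OF base1]
    proof
      fix x assume "x \<in> {x \<in> UNIV. f x \<in> U}"
      then obtain N2 where "N2 \<in> \<N>2" "(+) (f x) ` N2 \<subseteq> U"
        using U by auto
      obtain N1 where "N1 \<in> \<N>1" "f ` N1 \<subseteq> N2"
        using small \<open>N2 \<in> \<N>2\<close> by blast
      have "(+) x ` N1 \<subseteq> {x \<in> UNIV. f x \<in> U}"
      proof
        fix z assume "z \<in> (+) x ` N1"
        then obtain y where "y \<in> N1" "z = x + y"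
          by blast
        then show "z \<in> {x \<in> UNIV. f x \<in> U}"
          using \<open>f ` N1 \<subseteq> N2\<close> \<open>(+) (f x) ` N2 \<subseteq> U\<close> by (auto simp: add)
      qed
      then show "\<exists>N\<in>\<N>1. (+) x ` N \<subseteq> {x \<in> UNIV. f x \<in> U}"
        using \<open>N1 \<in> \<N>1\<close> by blast
    qed
  qed simp
qed

lemma linear_topology_cong:
  assumes "\<forall>N1\<in>\<N>1. \<exists>N2\<in>\<N>2. N2 \<subseteq> N1" "\<forall>N2\<in>\<N>2. \<exists>N1\<in>\<N>1. N1 \<subseteq> N2"
  shows "linear_topology \<N>1 = linear_topology \<N>2"
proof -
  have refines: "\<exists>N'\<in>\<N>'. (+) x ` N' \<subseteq> U"
    if finer: "\<forall>N\<in>\<N>. \<exists>N'\<in>\<N>'. N' \<subseteq> N" and "N \<in> \<N>" "(+) x ` N \<subseteq> U"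
    for x U N and \<N> \<N>' :: "'a set set"
  proof -
    obtain N' where "N' \<in> \<N>'" "N' \<subseteq> N"
      using finer \<open>N \<in> \<N>\<close> by blast
    then show ?thesis
      using \<open>(+) x ` N \<subseteq> U\<close> by (intro bexI[of _ N']) (auto intro: order_trans[OF image_mono])
  qed
  have "(\<lambda>U. \<forall>x\<in>U. \<exists>N\<in>\<N>1. (+) x ` N \<subseteq> U) = (\<lambda>U. \<forall>x\<in>U. \<exists>N\<in>\<N>2. (+) x ` N \<subseteq> U)"
    using refines[OF assms(1)] refines[OF assms(2)] by (intro ext) meson
  then show ?thesis
    unfolding linear_topology_def by simp
qed

lemma linear_topology_eq_iff:
  assumes base1: "linear_topology_base \<N>1" and base2: "linear_topology_base \<N>2"
  shows "linear_topology \<N>1 = linear_topology \<N>2 \<longleftrightarrow>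
    (\<forall>N1\<in>\<N>1. \<exists>N2\<in>\<N>2. N2 \<subseteq> N1) \<and> (\<forall>N2\<in>\<N>2. \<exists>N1\<in>\<N>1. N1 \<subseteq> N2)"
proof
  assume "linear_topology \<N>1 = linear_topology \<N>2"
  then have "continuous_map (linear_topology \<N>1) (linear_topology \<N>2) id"
    "continuous_map (linear_topology \<N>2) (linear_topology \<N>1) id"
    by simp_all
  then show "(\<forall>N1\<in>\<N>1. \<exists>N2\<in>\<N>2. N2 \<subseteq> N1) \<and> (\<forall>N2\<in>\<N>2. \<exists>N1\<in>\<N>1. N1 \<subseteq> N2)"
    by (simp add: continuous_map_linear_topology_iff[OF base1 base2]
        continuous_map_linear_topology_iff[OF base2 base1])
qed (simp add: linear_topology_cong)

section \<open>Subspaces and ideals of finite codimension\<close>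

definition finite_codim :: "('k::field \<Rightarrow> 'v::ab_group_add \<Rightarrow> 'v) \<Rightarrow> 'v set \<Rightarrow> bool" where
  "finite_codim s S \<longleftrightarrow> (\<exists>F. finite F \<and> module.span s (S \<union> F) = UNIV)"

lemma finite_codimI:
  "finite F \<Longrightarrow> UNIV \<subseteq> module.span s (S \<union> F) \<Longrightarrow> finite_codim s S"
  unfolding finite_codim_def by blast

lemma (in vector_space) finite_codim_UNIV: "finite_codim scale UNIV"
  using finite_codimI[of "{}" scale UNIV] by simp

lemma (in vector_space) finite_codim_mono:
  assumes "finite_codim scale S" "S \<subseteq> T"
  shows "finite_codim scale T"
proof -
  obtain F where "finite F" "span (S \<union> F) = UNIV"
    using assms(1) unfolding finite_codim_def by blast
  moreover have "span (S \<union> F) \<subseteq> span (T \<union> F)"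
    using assms(2) by (intro span_mono) blast
  ultimately show ?thesis
    by (intro finite_codimI[of F]) auto
qed

lemma linear_image_in_subspace:
  assumes "Vector_Spaces.linear s1 s2 g" "module.subspace s2 V" "module.span s1 S = UNIV"
    and "\<And>x. x \<in> S \<Longrightarrow> g x \<in> V"
  shows "g x \<in> V"
proof -
  interpret g: Vector_Spaces.linear s1 s2 g by fact
  have "g.vs1.span S \<subseteq> g -` V"
    using assms(4) by (intro g.vs1.span_minimal[OF _ g.subspace_vimage[OF assms(2)]]) blast
  then show ?thesis
    unfolding assms(3) by blast
qed

lemma vimage_span_insert_subset:
  assumes "vector_space s1" "vector_space s2" "Vector_Spaces.linear s1 s2 f"
    and D: "module.subspace s1 D" and S: "module.subspace s2 S"
  obtains a0 where
    "D \<inter> f -` module.span s2 (insert x S) \<subseteq> module.span s1 (insert a0 (D \<inter> f -` S))"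
proof -
  interpret V1: vector_space s1 by fact
  interpret V2: vector_space s2 by fact
  interpret f: Vector_Spaces.linear s1 s2 f by fact
  have spanS: "V2.span S = S"
    using S by simp
  show ?thesis
  proof (cases "\<exists>a0\<in>D. f a0 \<in> V2.span (insert x S) \<and> f a0 \<notin> S")
    case True
    then obtain a0 k0 where a0: "a0 \<in> D" "f a0 \<notin> S" "f a0 - s2 k0 x \<in> S"
      using V2.span_breakdown_eq spanS by metis
    then have "k0 \<noteq> 0"
      by auto
    have "a \<in> V1.span (insert a0 (D \<inter> f -` S))"
      if a: "a \<in> D" "f a \<in> V2.span (insert x S)" for a
    proof -
      obtain k where k: "f a - s2 k x \<in> S"
        using a(2) V2.span_breakdown_eq spanS by metis
      define c where "c = k / k0"
      have "f (a - s1 c a0) = (f a - s2 k x) - s2 c (f a0 - s2 k0 x)"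
        using \<open>k0 \<noteq> 0\<close> by (simp add: f.diff f.scale V2.scale_right_diff_distrib c_def)
      also have "\<dots> \<in> S"
        by (rule V2.subspace_diff[OF S k V2.subspace_scale[OF S a0(3)]])
      finally have "a - s1 c a0 \<in> D \<inter> f -` S"
        using D a(1) a0(1) by (simp add: V1.subspace_diff V1.subspace_scale)
      then show ?thesis
        unfolding V1.span_breakdown_eq by (blast intro: V1.span_base)
    qed
    then show ?thesis
      by (intro that[of a0]) blast
  next
    case False
    then have "D \<inter> f -` V2.span (insert x S) \<subseteq> D \<inter> f -` S"
      by blast
    then show ?thesis
      by (intro that[of 0]) (meson V1.span_superset subset_insertI order_trans)
  qed
qed

lemma finite_codim_vimage_on:
  assumes "vector_space s1" "vector_space s2" "Vector_Spaces.linear s1 s2 f"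
    and D: "module.subspace s1 D" and "finite F"
  shows "module.subspace s2 S \<Longrightarrow> f ` D \<subseteq> module.span s2 (S \<union> F) \<Longrightarrow>
    \<exists>G. finite G \<and> D \<subseteq> module.span s1 (D \<inter> f -` S \<union> G)"
  using \<open>finite F\<close>
proof (induction F arbitrary: S rule: finite_induct)
  interpret V1: vector_space s1 by fact
  interpret V2: vector_space s2 by fact
  case empty
  then have "D \<inter> f -` S = D"
    by (auto simp: V2.span_eq_iff[THEN iffD2])
  then show ?case
    using V1.span_superset by (intro exI[of _ "{}"]) auto
next
  interpret V1: vector_space s1 by fact
  interpret V2: vector_space s2 by fact
  case (insert x F)
  define S' where "S' = V2.span (insert x S)"
  have "S \<union> insert x F \<subseteq> S' \<union> F"
    unfolding S'_def using V2.span_superset by blast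
  then have "S \<union> insert x F \<subseteq> V2.span (S' \<union> F)"
    using V2.span_superset by (rule order_trans)
  then have "f ` D \<subseteq> V2.span (S' \<union> F)"
    using insert.prems(2) V2.span_minimal[OF _ V2.subspace_span] by blast
  then obtain G where "finite G" and G: "D \<subseteq> V1.span (D \<inter> f -` S' \<union> G)"
    using insert.IH[of S'] unfolding S'_def by blast
  obtain a0 where a0: "D \<inter> f -` S' \<subseteq> V1.span (insert a0 (D \<inter> f -` S))"
    using vimage_span_insert_subset[OF assms(1-3) D insert.prems(1)] unfolding S'_def by blast
  have "V1.span (insert a0 (D \<inter> f -` S)) \<subseteq> V1.span (D \<inter> f -` S \<union> insert a0 G)"
    by (rule V1.span_mono) blast
  moreover have "G \<subseteq> V1.span (D \<inter> f -` S \<union> insert a0 G)"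
    by (rule order_trans[OF _ V1.span_superset]) blast
  ultimately have "D \<inter> f -` S' \<union> G \<subseteq> V1.span (D \<inter> f -` S \<union> insert a0 G)"
    using a0 by (meson Un_least order_trans)
  then have "D \<subseteq> V1.span (D \<inter> f -` S \<union> insert a0 G)"
    using G by (meson V1.span_minimal V1.subspace_span order_trans)
  then show ?case
    using \<open>finite G\<close> by (intro exI[of _ "insert a0 G"]) simp
qed

lemma finite_codim_vimage:
  assumes "vector_space s1" "vector_space s2" "Vector_Spaces.linear s1 s2 f"
    and "module.subspace s2 S" "finite_codim s2 S"
  shows "finite_codim s1 (f -` S)"
proof -
  interpret V1: vector_space s1 by fact
  obtain F where "finite F" "module.span s2 (S \<union> F) = UNIV"
    using assms(5) unfolding finite_codim_def by blast
  then obtain G where "finite G" "UNIV \<subseteq> V1.span (UNIV \<inter> f -` S \<union> G)"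
    using finite_codim_vimage_on[OF assms(1-3) V1.subspace_UNIV _ assms(4)] by blast
  then show ?thesis
    by (intro finite_codimI[of G]) simp_all
qed

lemma (in vector_space) finite_codim_Int:
  assumes S: "subspace S" "finite_codim scale S" and T: "subspace T" "finite_codim scale T"
  shows "finite_codim scale (S \<inter> T)"
proof -
  obtain F where "finite F" "span (S \<union> F) = UNIV"
    using S(2) unfolding finite_codim_def by blast
  then obtain G where "finite G" and G: "T \<subseteq> span (T \<inter> id -` S \<union> G)"
    using finite_codim_vimage_on[OF vector_space_axioms vector_space_axioms linear_id T(1) _ S(1)]
    by blast
  obtain F' where "finite F'" and F': "span (T \<union> F') = UNIV"
    using T(2) unfolding finite_codim_def by blast
  have "T \<union> F' \<subseteq> span (S \<inter> T \<union> (G \<union> F'))"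
    using G span_mono[of "T \<inter> id -` S \<union> G" "S \<inter> T \<union> (G \<union> F')"]
      span_superset[of "S \<inter> T \<union> (G \<union> F')"] by auto
  then have "UNIV \<subseteq> span (S \<inter> T \<union> (G \<union> F'))"
    using F' by (metis span_minimal subspace_span)
  then show ?thesis
    using \<open>finite G\<close> \<open>finite F'\<close> by (intro finite_codimI[of "G \<union> F'"]) simp_all
qed

lemma (in vector_space) finite_codim_INT:
  assumes "finite X" "\<And>i. i \<in> X \<Longrightarrow> subspace (S i) \<and> finite_codim scale (S i)"
  shows "finite_codim scale (\<Inter>i\<in>X. S i)"
  using assms
proof (induction X rule: finite_induct)
  case empty
  then show ?case
    by (simp add: finite_codim_UNIV)
next
  case (insert i X)
  have "subspace (\<Inter>i\<in>X. S i)"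
    using insert.prems by (intro subspace_Inter) auto
  then show ?case
    using insert by (simp add: finite_codim_Int)
qed

lemma fin_codim_ideals_iff:
  "I \<in> fin_codim_ideals s m \<longleftrightarrow>
    module.subspace s I \<and> (\<forall>x\<in>I. \<forall>r. m r x \<in> I \<and> m x r \<in> I) \<and> finite_codim s I"
  by (simp add: fin_codim_ideals_def finite_codim_def)

lemma fin_codim_idealsD:
  assumes "I \<in> fin_codim_ideals s m"
  shows "module.subspace s I" "x \<in> I \<Longrightarrow> m r x \<in> I" "x \<in> I \<Longrightarrow> m x r \<in> I"
    "finite_codim s I"
  using assms unfolding fin_codim_ideals_iff by blast+

lemma (in vector_space) UNIV_in_fin_codim_ideals: "UNIV \<in> fin_codim_ideals scale m"
  by (simp add: fin_codim_ideals_iff finite_codim_UNIV)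

lemma (in vector_space) Int_in_fin_codim_ideals:
  assumes "I \<in> fin_codim_ideals scale m" "J \<in> fin_codim_ideals scale m"
  shows "I \<inter> J \<in> fin_codim_ideals scale m"
  using assms unfolding fin_codim_ideals_iff by (simp add: subspace_inter finite_codim_Int)

lemma (in vector_space) linear_topology_base_fin_codim_ideals:
  "linear_topology_base (fin_codim_ideals scale m)"
  unfolding linear_topology_base_def
proof (intro conjI)
  show "fin_codim_ideals scale m \<noteq> {}"
    using UNIV_in_fin_codim_ideals by blast
  show "\<forall>N\<in>fin_codim_ideals scale m. 0 \<in> N \<and> (\<forall>x\<in>N. \<forall>y\<in>N. x + y \<in> N)"
    using fin_codim_idealsD(1) subspace_0 subspace_add by blast
  show "\<forall>N1\<in>fin_codim_ideals scale m. \<forall>N2\<in>fin_codim_ideals scale m.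
      \<exists>N\<in>fin_codim_ideals scale m. N \<subseteq> N1 \<inter> N2"
    using Int_in_fin_codim_ideals by blast
qed

lemma vimage_fin_codim_ideal:
  assumes "vector_space s1" "vector_space s2" and f: "Vector_Spaces.linear s1 s2 f"
    and mult: "\<And>x y. f (m1 x y) = m2 (f x) (f y)" and K: "K \<in> fin_codim_ideals s2 m2"
  shows "f -` K \<in> fin_codim_ideals s1 m1"
  unfolding fin_codim_ideals_iff
proof (intro conjI)
  show "module.subspace s1 (f -` K)"
    using module_hom.subspace_vimage[OF module_hom_linearI[OF f] fin_codim_idealsD(1)[OF K]] .
  show "\<forall>x\<in>f -` K. \<forall>r. m1 r x \<in> f -` K \<and> m1 x r \<in> f -` K"
    by (simp add: mult fin_codim_idealsD(2,3)[OF K])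
  show "finite_codim s1 (f -` K)"
    using finite_codim_vimage[OF assms(1,2) f] fin_codim_idealsD(1,4)[OF K] .
qed

text \<open>The classical fact that the annihilator of the finite-dimensional module
  \<open>V / L\<close> has finite codimension: it is the intersection of the finitely many
  subspaces \<open>{z. z f \<in> L}\<close>, \<open>f\<close> ranging over a complement of \<open>L\<close>.\<close>
lemma (in vector_space) fin_codim_left_ideal_contains_ideal:
  assumes bilin: "bilinear_map scale scale scale m"
    and assoc: "\<And>x y z. m (m x y) z = m x (m y z)" and unit: "\<And>x. m x e = x"
    and L: "subspace L" "\<And>r z. z \<in> L \<Longrightarrow> m r z \<in> L" "finite_codim scale L"
  shows "\<exists>K\<in>fin_codim_ideals scale m. K \<subseteq> L"
proof -
  have lin_left: "Vector_Spaces.linear scale scale (\<lambda>z. m z r)"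
    and lin_right: "Vector_Spaces.linear scale scale (m z)" for r z
    using bilin unfolding bilinear_map_def by blast+
  define K where "K = {z. \<forall>r. m z r \<in> L}"
  obtain F where "finite F" and F: "span (L \<union> F) = UNIV"
    using L(3) unfolding finite_codim_def by blast
  have K_eq: "K = (\<Inter>f\<in>F. (\<lambda>z. m z f) -` L)"
  proof
    show "(\<Inter>f\<in>F. (\<lambda>z. m z f) -` L) \<subseteq> K"
    proof
      fix z assume z: "z \<in> (\<Inter>f\<in>F. (\<lambda>z. m z f) -` L)"
      have "m z r \<in> L" for r
        by (rule linear_image_in_subspace[OF lin_right L(1) F]) (use z L(2) in blast)
      then show "z \<in> K"
        unfolding K_def by blast
    qed
  qed (auto simp: K_def)
  have "subspace K" "finite_codim scale K"
    unfolding K_eq using \<open>finite F\<close>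
    by (auto intro!: subspace_Inter finite_codim_INT finite_codim_vimage[OF _ _ lin_left]
        module_hom.subspace_vimage[OF module_hom_linearI[OF lin_left]] L(1,3) vector_space_axioms)
  moreover have "\<forall>x\<in>K. \<forall>r. m r x \<in> K \<and> m x r \<in> K"
    by (simp add: K_def assoc L(2))
  moreover have "K \<subseteq> L"
    unfolding K_def using unit by (metis (mono_tags) mem_Collect_eq subsetI)
  ultimately show ?thesis
    by (intro bexI[of _ K]) (simp_all add: fin_codim_ideals_iff)
qed

lemma (in vector_space) fin_codim_ideal_below_subspace:
  assumes bilin: "bilinear_map scale scale scale m"
    and assoc: "\<And>x y z. m (m x y) z = m x (m y z)"
    and unit: "\<And>x. m e x = x" "\<And>x. m x e = x"
    and W: "subspace W" and fc: "finite_codim scale {z. \<forall>y. m y z \<in> W}"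
  shows "\<exists>K\<in>fin_codim_ideals scale m. K \<subseteq> W"
proof -
  define L where "L = {z. \<forall>y. m y z \<in> W}"
  have "Vector_Spaces.linear scale scale (m y)" for y
    using bilin unfolding bilinear_map_def by blast
  then have "subspace (m y -` W)" for y
    using module_hom.subspace_vimage[OF module_hom_linearI W] by blast
  moreover have "L = (\<Inter>y. m y -` W)"
    unfolding L_def by blast
  ultimately have "subspace L"
    by (simp add: subspace_Inter)
  moreover have "m r z \<in> L" if "z \<in> L" for r z
    using that unfolding L_def by (simp add: assoc[symmetric])
  ultimately obtain K where "K \<in> fin_codim_ideals scale m" "K \<subseteq> L"
    using fin_codim_left_ideal_contains_ideal[OF bilin assoc unit(2)] fc unfolding L_def by blast
  moreover have "L \<subseteq> W"
  proof
    fix z assume "z \<in> L"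
    then have "m e z \<in> W"
      unfolding L_def by blast
    then show "z \<in> W"
      by (simp only: unit(1))
  qed
  ultimately show ?thesis
    by blast
qed

section \<open>Tensor products and their neighbourhoods of zero\<close>

lemma is_tensor_productD:
  assumes "is_tensor_product sA sB sT t"
  shows "vector_space sA" "vector_space sB" "vector_space sT"
    "Vector_Spaces.linear sA sT (\<lambda>a. t a b)" "Vector_Spaces.linear sB sT (t a)"
    "module.span sT (range (case_prod t)) = UNIV"
  using assms unfolding is_tensor_product_def bilinear_map_def by blast+

lemma tensor_product_induct:
  assumes "is_tensor_product sA sB sT t" "module.subspace sT X" "\<And>x y. t x y \<in> X"
  shows "w \<in> X"
proof -
  interpret T: vector_space sT
    by (rule is_tensor_productD(3)[OF assms(1)])
  have "T.span (range (case_prod t)) \<subseteq> X"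
    using assms(3) by (intro T.span_minimal[OF _ assms(2)]) auto
  then show ?thesis
    unfolding is_tensor_productD(6)[OF assms(1)] by blast
qed

lemma tensor_product_sum_pure:
  assumes "is_tensor_product sA sB sT t"
  shows "\<exists>n::nat. \<exists>x y. v = (\<Sum>i<n. t (x i) (y i))"
proof -
  interpret T: vector_space sT
    by (rule is_tensor_productD(3)[OF assms])
  have "v \<in> T.span (range (case_prod t))"
    unfolding is_tensor_productD(6)[OF assms] ..
  then show ?thesis
  proof (induction rule: T.span_induct_alt)
    case base
    have "0 = (\<Sum>i<0::nat. t (x i) (y i))" for x y
      by simp
    then show ?case
      by blast
  next
    case (step c z w)
    obtain a b where z: "z = t a b"
      using step.hyps by auto
    obtain n :: nat and x y where w: "w = (\<Sum>i<n. t (x i) (y i))"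
      using step.IH by blast
    have "t (sA c a) b = sT c z"
      using is_tensor_productD(4)[OF assms] by (simp add: z Vector_Spaces.linear_iff)
    then have "sT c z + w = (\<Sum>i<Suc n. t ((x(n := sA c a)) i) ((y(n := b)) i))"
      by (simp add: w)
    then show ?case
      by blast
  qed
qed

abbreviation tensor_nbhd ::
  "('k::field \<Rightarrow> 't::ab_group_add \<Rightarrow> 't) \<Rightarrow> ('a \<Rightarrow> 'b \<Rightarrow> 't) \<Rightarrow> 'a set \<Rightarrow> 'b set \<Rightarrow> 't set" where
  "tensor_nbhd sT t E F \<equiv> tensor_sub sT t E UNIV + tensor_sub sT t UNIV F"

definition tensor_nbhds ::
  "('k::field \<Rightarrow> 't::ab_group_add \<Rightarrow> 't) \<Rightarrow> ('a \<Rightarrow> 'b \<Rightarrow> 't) \<Rightarrow> 'a set set \<Rightarrow> 'b set set \<Rightarrow> 't set set"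
  where "tensor_nbhds sT t \<N>A \<N>B = {tensor_nbhd sT t I J | I J. I \<in> \<N>A \<and> J \<in> \<N>B}"

lemma tensor_nbhdsI: "I \<in> \<N>A \<Longrightarrow> J \<in> \<N>B \<Longrightarrow> tensor_nbhd sT t I J \<in> tensor_nbhds sT t \<N>A \<N>B"
  unfolding tensor_nbhds_def by blast

lemma tensor_nbhdsE:
  assumes "N \<in> tensor_nbhds sT t \<N>A \<N>B"
  obtains I J where "N = tensor_nbhd sT t I J" "I \<in> \<N>A" "J \<in> \<N>B"
  using assms unfolding tensor_nbhds_def by blast

lemma ball_tensor_nbhds:
  "(\<forall>N\<in>tensor_nbhds sT t \<N>A \<N>B. P N) \<longleftrightarrow> (\<forall>I\<in>\<N>A. \<forall>J\<in>\<N>B. P (tensor_nbhd sT t I J))"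
  unfolding tensor_nbhds_def by blast

lemma bex_tensor_nbhds:
  "(\<exists>N\<in>tensor_nbhds sT t \<N>A \<N>B. P N) \<longleftrightarrow> (\<exists>I\<in>\<N>A. \<exists>J\<in>\<N>B. P (tensor_nbhd sT t I J))"
  unfolding tensor_nbhds_def by blast

lemma (in vector_space) tensor_nbhd_eq_span:
  "tensor_nbhd scale t E F = span {t x y | x y. x \<in> E \<or> y \<in> F}"
proof -
  have "tensor_nbhd scale t E F =
      span ({t x y | x y. x \<in> E \<and> y \<in> UNIV} \<union> {t x y | x y. x \<in> UNIV \<and> y \<in> F})"
    unfolding tensor_sub_def span_Un set_plus_def by auto
  also have "{t x y | x y. x \<in> E \<and> y \<in> UNIV} \<union> {t x y | x y. x \<in> UNIV \<and> y \<in> F} =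
      {t x y | x y. x \<in> E \<or> y \<in> F}"
    by blast
  finally show ?thesis .
qed

lemma (in vector_space) subspace_tensor_nbhd: "subspace (tensor_nbhd scale t E F)"
  unfolding tensor_nbhd_eq_span by (rule subspace_span)

lemma (in vector_space) tensor_nbhd_mono:
  "E \<subseteq> E' \<Longrightarrow> F \<subseteq> F' \<Longrightarrow> tensor_nbhd scale t E F \<subseteq> tensor_nbhd scale t E' F'"
  unfolding tensor_nbhd_eq_span by (rule span_mono) blast

lemma (in vector_space) pure_tensor_in_tensor_nbhd:
  "x \<in> E \<or> y \<in> F \<Longrightarrow> t x y \<in> tensor_nbhd scale t E F"
  unfolding tensor_nbhd_eq_span by (rule span_base) blast

lemma linear_image_tensor_nbhd_subset:
  assumes g: "Vector_Spaces.linear sT s2 g" and X: "module.subspace s2 X"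
    and pure: "\<And>x y. x \<in> E \<or> y \<in> F \<Longrightarrow> g (t x y) \<in> X"
  shows "g ` tensor_nbhd sT t E F \<subseteq> X"
proof -
  interpret g: Vector_Spaces.linear sT s2 g by fact
  have "{t x y | x y. x \<in> E \<or> y \<in> F} \<subseteq> g -` X"
    using pure by blast
  then have "g.vs1.span {t x y | x y. x \<in> E \<or> y \<in> F} \<subseteq> g -` X"
    by (rule g.vs1.span_minimal[OF _ g.subspace_vimage[OF X]])
  then show ?thesis
    unfolding g.vs1.tensor_nbhd_eq_span by blast
qed

lemma finite_codim_tensor_nbhd:
  assumes tp: "is_tensor_product sA sB sT t"
    and "finite_codim sA E" "finite_codim sB F"
  shows "finite_codim sT (tensor_nbhd sT t E F)"
proof -
  interpret A: vector_space sA by (rule is_tensor_productD(1)[OF tp])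
  interpret B: vector_space sB by (rule is_tensor_productD(2)[OF tp])
  interpret T: vector_space sT by (rule is_tensor_productD(3)[OF tp])
  obtain E' where "finite E'" and E': "A.span (E \<union> E') = UNIV"
    using assms(2) unfolding finite_codim_def by blast
  obtain F' where "finite F'" and F': "B.span (F \<union> F') = UNIV"
    using assms(3) unfolding finite_codim_def by blast
  define V where "V = T.span (tensor_nbhd sT t E F \<union> case_prod t ` (E' \<times> F'))"
  have "T.subspace V"
    unfolding V_def by (rule T.subspace_span)
  have V_nbhd: "t x y \<in> V" if "x \<in> E \<or> y \<in> F" for x y
    unfolding V_def using T.pure_tensor_in_tensor_nbhd[OF that] by (intro T.span_base UnI1)
  have V_corner: "t x y \<in> V" if "x \<in> E'" "y \<in> F'" for x y
    unfolding V_def using that by (intro T.span_base UnI2) force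
  have V_cofinite_left: "t x y \<in> V" if "x \<in> E'" for x y
    by (rule linear_image_in_subspace[OF is_tensor_productD(5)[OF tp] \<open>T.subspace V\<close> F'])
      (use V_nbhd V_corner that in auto)
  have "t x y \<in> V" for x y
    by (rule linear_image_in_subspace[OF is_tensor_productD(4)[OF tp] \<open>T.subspace V\<close> E'])
      (use V_nbhd V_cofinite_left in auto)
  then have "UNIV \<subseteq> V"
    using tensor_product_induct[OF tp \<open>T.subspace V\<close>] by blast
  then show ?thesis
    unfolding V_def using \<open>finite E'\<close> \<open>finite F'\<close> by (intro finite_codimI) simp_all
qed

lemma (in vector_space) linear_topology_base_tensor_nbhds:
  assumes "linear_topology_base \<N>A" "linear_topology_base \<N>B"
  shows "linear_topology_base (tensor_nbhds scale t \<N>A \<N>B)"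
  unfolding linear_topology_base_def
proof (intro conjI)
  obtain I J where "I \<in> \<N>A" "J \<in> \<N>B"
    using linear_topology_baseD(1)[OF assms(1)] linear_topology_baseD(1)[OF assms(2)] by blast
  then show "tensor_nbhds scale t \<N>A \<N>B \<noteq> {}"
    using tensor_nbhdsI by blast
  have "subspace N" if "N \<in> tensor_nbhds scale t \<N>A \<N>B" for N
    using that by (metis tensor_nbhdsE subspace_tensor_nbhd)
  then show "\<forall>N\<in>tensor_nbhds scale t \<N>A \<N>B. 0 \<in> N \<and> (\<forall>x\<in>N. \<forall>y\<in>N. x + y \<in> N)"
    using subspace_0 subspace_add by blast
next
  show "\<forall>N1\<in>tensor_nbhds scale t \<N>A \<N>B. \<forall>N2\<in>tensor_nbhds scale t \<N>A \<N>B.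
      \<exists>N\<in>tensor_nbhds scale t \<N>A \<N>B. N \<subseteq> N1 \<inter> N2"
  proof (intro ballI)
    fix N1 N2 assume "N1 \<in> tensor_nbhds scale t \<N>A \<N>B" "N2 \<in> tensor_nbhds scale t \<N>A \<N>B"
    then obtain I1 J1 I2 J2 where N: "N1 = tensor_nbhd scale t I1 J1" "N2 = tensor_nbhd scale t I2 J2"
      and "I1 \<in> \<N>A" "J1 \<in> \<N>B" "I2 \<in> \<N>A" "J2 \<in> \<N>B"
      by (metis tensor_nbhdsE)
    then obtain I J where "I \<in> \<N>A" "I \<subseteq> I1 \<inter> I2" "J \<in> \<N>B" "J \<subseteq> J1 \<inter> J2"
      using linear_topology_baseD(4)[OF assms(1)] linear_topology_baseD(4)[OF assms(2)] by metis
    moreover from this have "tensor_nbhd scale t I J \<subseteq> N1 \<inter> N2"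
      unfolding N using tensor_nbhd_mono by (metis le_inf_iff)
    ultimately show "\<exists>N\<in>tensor_nbhds scale t \<N>A \<N>B. N \<subseteq> N1 \<inter> N2"
      by (metis tensor_nbhdsI)
  qed
qed

lemma (in vector_space) tensor_sub_subset_tensor_nbhd:
  "tensor_sub scale t E UNIV \<subseteq> tensor_nbhd scale t E F"
  "tensor_sub scale t UNIV F \<subseteq> tensor_nbhd scale t E F"
  unfolding tensor_nbhd_eq_span by (unfold tensor_sub_def) (rule span_mono, blast)+

lemma (in vector_space) tensor_shriek_topology_eq:
  assumes "vector_space sA" "linear_topology_base \<N>A" "\<forall>I\<in>\<N>A. module.subspace sA I"
    and "vector_space sB" "linear_topology_base \<N>B" "\<forall>J\<in>\<N>B. module.subspace sB J"
  shows "tensor_shriek_topology sA sB scale t (linear_topology \<N>A) (linear_topology \<N>B) =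
    linear_topology (tensor_nbhds scale t \<N>A \<N>B)"
proof -
  interpret A: vector_space sA by fact
  interpret B: vector_space sB by fact
  show ?thesis
    unfolding tensor_shriek_topology_def
  proof (intro linear_topology_cong ballI)
    fix N assume "N \<in> {tensor_nbhd scale t E0 F0 | E0 F0. module.subspace sA E0 \<and>
        openin (linear_topology \<N>A) E0 \<and> module.subspace sB F0 \<and> openin (linear_topology \<N>B) F0}"
    then obtain E0 F0 where N: "N = tensor_nbhd scale t E0 F0"
      and E0: "module.subspace sA E0" "openin (linear_topology \<N>A) E0"
      and F0: "module.subspace sB F0" "openin (linear_topology \<N>B) F0"
      by blast
    obtain I where I: "I \<in> \<N>A" "I \<subseteq> E0"
      using linear_topology_base_subset_open[OF assms(2) E0(2) A.subspace_0[OF E0(1)]] by blast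
    obtain J where J: "J \<in> \<N>B" "J \<subseteq> F0"
      using linear_topology_base_subset_open[OF assms(5) F0(2) B.subspace_0[OF F0(1)]] by blast
    have "tensor_nbhd scale t I J \<subseteq> N"
      unfolding N using I(2) J(2) by (rule tensor_nbhd_mono)
    then show "\<exists>N'\<in>tensor_nbhds scale t \<N>A \<N>B. N' \<subseteq> N"
      using tensor_nbhdsI[OF I(1) J(1)] by blast
  next
    fix N assume "N \<in> tensor_nbhds scale t \<N>A \<N>B"
    then obtain I J where N: "N = tensor_nbhd scale t I J" and "I \<in> \<N>A" "J \<in> \<N>B"
      by (rule tensor_nbhdsE)
    then have "module.subspace sA I \<and> openin (linear_topology \<N>A) I \<and>
        module.subspace sB J \<and> openin (linear_topology \<N>B) J"
      using assms openin_linear_topology_base[OF assms(2)] openin_linear_topology_base[OF assms(5)]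
      by simp
    then have "N \<in> {tensor_nbhd scale t E0 F0 | E0 F0. module.subspace sA E0 \<and>
        openin (linear_topology \<N>A) E0 \<and> module.subspace sB F0 \<and> openin (linear_topology \<N>B) F0}"
      unfolding N by blast
    then show "\<exists>N'\<in>{tensor_nbhd scale t E0 F0 | E0 F0. module.subspace sA E0 \<and>
        openin (linear_topology \<N>A) E0 \<and> module.subspace sB F0 \<and> openin (linear_topology \<N>B) F0}.
        N' \<subseteq> N"
      by blast
  qed
qed

section \<open>Twisted tensor products\<close>

locale twisted_tensor_algebra =
  fixes sA :: "'k::field \<Rightarrow> 'a::ring_1 \<Rightarrow> 'a"
    and sB :: "'k \<Rightarrow> 'b::ring_1 \<Rightarrow> 'b"
    and sAB :: "'k \<Rightarrow> 'ab::ab_group_add \<Rightarrow> 'ab"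
    and sBA :: "'k \<Rightarrow> 'ba::ab_group_add \<Rightarrow> 'ba"
    and tAB :: "'a \<Rightarrow> 'b \<Rightarrow> 'ab"
    and tBA :: "'b \<Rightarrow> 'a \<Rightarrow> 'ba"
    and \<tau> :: "'ba \<Rightarrow> 'ab"
    and mt :: "'ab \<Rightarrow> 'ab \<Rightarrow> 'ab"
  assumes tensor_AB: "is_tensor_product sA sB sAB tAB"
    and tensor_BA: "is_tensor_product sB sA sBA tBA"
    and twisting: "is_twisting_map sBA sAB tAB tBA \<tau> mt"
begin

sublocale A: vector_space sA
  by (rule is_tensor_productD(1)[OF tensor_AB])
sublocale B: vector_space sB
  by (rule is_tensor_productD(2)[OF tensor_AB])
sublocale AB: vector_space sAB
  by (rule is_tensor_productD(3)[OF tensor_AB])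
sublocale BA: vector_space sBA
  by (rule is_tensor_productD(3)[OF tensor_BA])

abbreviation "FA \<equiv> fin_codim_ideals sA (*)"
abbreviation "FB \<equiv> fin_codim_ideals sB (*)"
abbreviation "FAB \<equiv> fin_codim_ideals sAB mt"

lemma linear_tau: "Vector_Spaces.linear sBA sAB \<tau>"
  using twisting unfolding is_twisting_map_def by blast

lemma bilinear_mult: "bilinear_map sAB sAB sAB mt"
  using twisting unfolding is_twisting_map_def is_twisted_mult_def by blast

lemma linear_mult_left: "Vector_Spaces.linear sAB sAB (\<lambda>x. mt x y)"
  and linear_mult_right: "Vector_Spaces.linear sAB sAB (mt x)"
  using bilinear_mult unfolding bilinear_map_def by blast+

lemma mult_assoc: "mt (mt x y) z = mt x (mt y z)"
  using twisting unfolding is_twisting_map_def by blast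

lemma mult_one_left: "mt (tAB 1 1) x = x"
  and mult_one_right: "mt x (tAB 1 1) = x"
  using twisting unfolding is_twisting_map_def by blast+

lemma mult_pure_tensors_sum:
  fixes n :: nat
  assumes "\<tau> (tBA b a') = (\<Sum>i<n. tAB (x i) (y i))"
  shows "mt (tAB a b) (tAB a' b') = (\<Sum>i<n. tAB (a * x i) (y i * b'))"
proof -
  have "\<forall>a b a' b' (I::nat set) x y. finite I \<longrightarrow> \<tau> (tBA b a') = (\<Sum>i\<in>I. tAB (x i) (y i)) \<longrightarrow>
      mt (tAB a b) (tAB a' b') = (\<Sum>i\<in>I. tAB (a * x i) (y i * b'))"
    using twisting unfolding is_twisting_map_def is_twisted_mult_def by blast
  from this[rule_format, of "{..<n}"] show ?thesis
    using assms by blast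
qed

lemma tau_eq_mult: "\<tau> (tBA b a) = mt (tAB 1 b) (tAB a 1)"
proof -
  obtain n :: nat and x y where "\<tau> (tBA b a) = (\<Sum>i<n. tAB (x i) (y i))"
    using tensor_product_sum_pure[OF tensor_AB] by blast
  moreover from this have "mt (tAB 1 b) (tAB a 1) = (\<Sum>i<n. tAB (1 * x i) (y i * 1))"
    by (rule mult_pure_tensors_sum)
  ultimately show ?thesis
    by simp
qed

lemma mult_A_pure: "mt (tAB a 1) (tAB x y) = tAB (a * x) y"
proof -
  have "\<tau> (tBA 1 x) = (\<Sum>i<1::nat. tAB x 1)"
    using tau_eq_mult[of 1 x] mult_one_left by simp
  from mult_pure_tensors_sum[OF this] show ?thesis
    by simp
qed

lemma mult_pure_B: "mt (tAB x y) (tAB 1 b) = tAB x (y * b)"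
proof -
  have "\<tau> (tBA y 1) = (\<Sum>i<1::nat. tAB 1 y)"
    using tau_eq_mult[of y 1] mult_one_right by simp
  from mult_pure_tensors_sum[OF this] show ?thesis
    by simp
qed

lemma pure_tensor_eq_mult: "tAB a b = mt (tAB a 1) (tAB 1 b)"
  using mult_A_pure[of a 1 b] by simp

lemma mult_pure_pure: "mt (tAB a b) (tAB x y) = mt (tAB a 1) (mt (\<tau> (tBA b x)) (tAB 1 y))"
  by (simp only: pure_tensor_eq_mult[of a b] pure_tensor_eq_mult[of x y] tau_eq_mult mult_assoc)

lemma vimage_left_fin_codim_ideal:
  assumes "K \<in> FAB"
  shows "(\<lambda>a. tAB a 1) -` K \<in> FA"
  using vimage_fin_codim_ideal[OF A.vector_space_axioms AB.vector_space_axioms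
      is_tensor_productD(4)[OF tensor_AB] _ assms] mult_A_pure[of _ _ 1] by simp

lemma vimage_right_fin_codim_ideal:
  assumes "K \<in> FAB"
  shows "tAB 1 -` K \<in> FB"
  using vimage_fin_codim_ideal[OF B.vector_space_axioms AB.vector_space_axioms
      is_tensor_productD(5)[OF tensor_AB] _ assms] mult_pure_B[of 1] by simp

lemma tensor_nbhd_vimages_subset:
  assumes K: "K \<in> FAB"
  shows "tensor_nbhd sAB tAB ((\<lambda>a. tAB a 1) -` K) (tAB 1 -` K) \<subseteq> K"
proof -
  have "id ` tensor_nbhd sAB tAB ((\<lambda>a. tAB a 1) -` K) (tAB 1 -` K) \<subseteq> K"
  proof (rule linear_image_tensor_nbhd_subset[OF AB.linear_id fin_codim_idealsD(1)[OF K]])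
    fix x y assume "x \<in> (\<lambda>a. tAB a 1) -` K \<or> y \<in> tAB 1 -` K"
    then show "id (tAB x y) \<in> K"
      using fin_codim_idealsD(2,3)[OF K] pure_tensor_eq_mult[of x y] by auto
  qed
  then show ?thesis
    by simp
qed

lemma tau_tensor_nbhd_vimages_subset:
  assumes K: "K \<in> FAB"
  shows "\<tau> ` tensor_nbhd sBA tBA (tAB 1 -` K) ((\<lambda>a. tAB a 1) -` K) \<subseteq> K"
proof (rule linear_image_tensor_nbhd_subset[OF linear_tau fin_codim_idealsD(1)[OF K]])
  fix x y assume "x \<in> tAB 1 -` K \<or> y \<in> (\<lambda>a. tAB a 1) -` K"
  then show "\<tau> (tBA x y) \<in> K"
    using fin_codim_idealsD(2,3)[OF K] tau_eq_mult[of x y] by auto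
qed

lemma tensor_nbhd_mult_closed:
  assumes I: "I \<in> FA" and J: "J \<in> FB" and w: "w \<in> tensor_nbhd sAB tAB I J"
  shows "mt (tAB a 1) w \<in> tensor_nbhd sAB tAB I J"
    and "mt w (tAB 1 b) \<in> tensor_nbhd sAB tAB I J"
proof -
  have "mt (tAB a 1) ` tensor_nbhd sAB tAB I J \<subseteq> tensor_nbhd sAB tAB I J"
  proof (rule linear_image_tensor_nbhd_subset[OF linear_mult_right AB.subspace_tensor_nbhd])
    fix x y assume "x \<in> I \<or> y \<in> J"
    then show "mt (tAB a 1) (tAB x y) \<in> tensor_nbhd sAB tAB I J"
      using fin_codim_idealsD(2)[OF I] by (auto simp: mult_A_pure intro: AB.pure_tensor_in_tensor_nbhd)
  qed
  then show "mt (tAB a 1) w \<in> tensor_nbhd sAB tAB I J"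
    using w by blast
  have "(\<lambda>w. mt w (tAB 1 b)) ` tensor_nbhd sAB tAB I J \<subseteq> tensor_nbhd sAB tAB I J"
  proof (rule linear_image_tensor_nbhd_subset[OF linear_mult_left AB.subspace_tensor_nbhd])
    fix x y assume "x \<in> I \<or> y \<in> J"
    then show "mt (tAB x y) (tAB 1 b) \<in> tensor_nbhd sAB tAB I J"
      using fin_codim_idealsD(3)[OF J] by (auto simp: mult_pure_B intro: AB.pure_tensor_in_tensor_nbhd)
  qed
  then show "mt w (tAB 1 b) \<in> tensor_nbhd sAB tAB I J"
    using w by blast
qed

lemma mult_right_ideal_in_tensor_nbhd:
  assumes J: "J \<in> FB" and "j \<in> J"
  shows "mt w (tAB 1 j) \<in> tensor_nbhd sAB tAB I J"
proof (rule tensor_product_induct[OF tensor_AB, of "(\<lambda>w. mt w (tAB 1 j)) -` _", simplified])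
  show "AB.subspace ((\<lambda>w. mt w (tAB 1 j)) -` tensor_nbhd sAB tAB I J)"
    by (rule module_hom.subspace_vimage[OF module_hom_linearI[OF linear_mult_left] AB.subspace_tensor_nbhd])
  fix x y
  show "mt (tAB x y) (tAB 1 j) \<in> tensor_nbhd sAB tAB I J"
    using fin_codim_idealsD(2)[OF J \<open>j \<in> J\<close>] by (simp add: mult_pure_B AB.pure_tensor_in_tensor_nbhd)
qed

text \<open>By \<open>(a \<otimes> b)(x \<otimes> y) = (a \<otimes> 1) \<tau>(b \<otimes> x) (1 \<otimes> y)\<close>, the largest left ideal contained in
  \<open>I \<otimes> B + A \<otimes> J\<close> contains \<open>I' \<otimes> B + A \<otimes> J\<close>.\<close>
lemma fin_codim_ideal_below_tensor_nbhd:
  assumes I: "I \<in> FA" and J: "J \<in> FB" and I': "I' \<in> FA"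
    and twist: "\<And>b x. x \<in> I' \<Longrightarrow> \<tau> (tBA b x) \<in> tensor_nbhd sAB tAB I J"
  shows "\<exists>K\<in>FAB. K \<subseteq> tensor_nbhd sAB tAB I J"
proof -
  define W where "W = tensor_nbhd sAB tAB I J"
  have "mt y (tAB x y') \<in> W" if "x \<in> I' \<or> y' \<in> J" for x y' y
  proof (rule tensor_product_induct[OF tensor_AB, of "(\<lambda>y. mt y (tAB x y')) -` W", simplified])
    show "AB.subspace ((\<lambda>y. mt y (tAB x y')) -` W)"
      unfolding W_def
      by (rule module_hom.subspace_vimage[OF module_hom_linearI[OF linear_mult_left] AB.subspace_tensor_nbhd])
    fix a b
    show "mt (tAB a b) (tAB x y') \<in> W"
      unfolding mult_pure_pure W_def
      using that twist tensor_nbhd_mult_closed[OF I J] mult_right_ideal_in_tensor_nbhd[OF J] by blast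
  qed
  then have "mt y ` tensor_nbhd sAB tAB I' J \<subseteq> W" for y
    unfolding W_def by (intro linear_image_tensor_nbhd_subset[OF linear_mult_right AB.subspace_tensor_nbhd])
  then have "tensor_nbhd sAB tAB I' J \<subseteq> {z. \<forall>y. mt y z \<in> W}"
    by blast
  then have "finite_codim sAB {z. \<forall>y. mt y z \<in> W}"
    using finite_codim_tensor_nbhd[OF tensor_AB fin_codim_idealsD(4)[OF I'] fin_codim_idealsD(4)[OF J]]
    by (simp add: AB.finite_codim_mono)
  then show ?thesis
    unfolding W_def
    by (rule AB.fin_codim_ideal_below_subspace[OF bilinear_mult mult_assoc mult_one_left mult_one_right
          AB.subspace_tensor_nbhd])
qed

lemma ex_fin_codim_ideal_below_tensor_nbhd_iff:
  assumes I: "I \<in> FA" and J: "J \<in> FB"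
  shows "(\<exists>K\<in>FAB. K \<subseteq> tensor_nbhd sAB tAB I J) \<longleftrightarrow>
    (\<exists>J'\<in>FB. \<exists>I'\<in>FA. \<tau> ` tensor_nbhd sBA tBA J' I' \<subseteq> tensor_nbhd sAB tAB I J)"
proof
  assume "\<exists>K\<in>FAB. K \<subseteq> tensor_nbhd sAB tAB I J"
  then obtain K where K: "K \<in> FAB" "K \<subseteq> tensor_nbhd sAB tAB I J"
    by blast
  have "\<tau> ` tensor_nbhd sBA tBA (tAB 1 -` K) ((\<lambda>a. tAB a 1) -` K) \<subseteq> tensor_nbhd sAB tAB I J"
    using tau_tensor_nbhd_vimages_subset[OF K(1)] K(2) by (rule order_trans)
  then show "\<exists>J'\<in>FB. \<exists>I'\<in>FA. \<tau> ` tensor_nbhd sBA tBA J' I' \<subseteq> tensor_nbhd sAB tAB I J"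
    using vimage_left_fin_codim_ideal[OF K(1)] vimage_right_fin_codim_ideal[OF K(1)] by blast
next
  assume "\<exists>J'\<in>FB. \<exists>I'\<in>FA. \<tau> ` tensor_nbhd sBA tBA J' I' \<subseteq> tensor_nbhd sAB tAB I J"
  then obtain J' I' where "I' \<in> FA" and twist: "\<tau> ` tensor_nbhd sBA tBA J' I' \<subseteq> tensor_nbhd sAB tAB I J"
    by blast
  have "\<tau> (tBA b x) \<in> tensor_nbhd sAB tAB I J" if "x \<in> I'" for b x
    using twist BA.pure_tensor_in_tensor_nbhd[where t=tBA and E=J' and F=I'] that by blast
  then show "\<exists>K\<in>FAB. K \<subseteq> tensor_nbhd sAB tAB I J"
    by (rule fin_codim_ideal_below_tensor_nbhd[OF I J \<open>I' \<in> FA\<close>])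
qed

lemma tensor_shriek_topology_AB:
  "tensor_shriek_topology sA sB sAB tAB (cofinite_topology sA (*)) (cofinite_topology sB (*)) =
    linear_topology (tensor_nbhds sAB tAB FA FB)"
  unfolding cofinite_topology_def
  using AB.tensor_shriek_topology_eq[OF A.vector_space_axioms A.linear_topology_base_fin_codim_ideals _
      B.vector_space_axioms B.linear_topology_base_fin_codim_ideals]
  by (simp add: fin_codim_idealsD(1))

lemma tensor_shriek_topology_BA:
  "tensor_shriek_topology sB sA sBA tBA (cofinite_topology sB (*)) (cofinite_topology sA (*)) =
    linear_topology (tensor_nbhds sBA tBA FB FA)"
  unfolding cofinite_topology_def
  using BA.tensor_shriek_topology_eq[OF B.vector_space_axioms B.linear_topology_base_fin_codim_ideals _
      A.vector_space_axioms A.linear_topology_base_fin_codim_ideals]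
  by (simp add: fin_codim_idealsD(1))

lemma continuous_map_twisting_iff:
  "continuous_map
     (tensor_shriek_topology sB sA sBA tBA (cofinite_topology sB (*)) (cofinite_topology sA (*)))
     (tensor_shriek_topology sA sB sAB tAB (cofinite_topology sA (*)) (cofinite_topology sB (*))) \<tau> \<longleftrightarrow>
   (\<forall>I\<in>FA. \<forall>J\<in>FB. \<exists>J'\<in>FB. \<exists>I'\<in>FA. \<tau> ` tensor_nbhd sBA tBA J' I' \<subseteq> tensor_nbhd sAB tAB I J)"
  unfolding tensor_shriek_topology_AB tensor_shriek_topology_BA
  by (simp add: continuous_map_linear_topology_iff[OF
        BA.linear_topology_base_tensor_nbhds[OF B.linear_topology_base_fin_codim_ideals
          A.linear_topology_base_fin_codim_ideals]
        AB.linear_topology_base_tensor_nbhds[OF A.linear_topology_base_fin_codim_ideals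
          B.linear_topology_base_fin_codim_ideals]
        module_hom.add[OF module_hom_linearI[OF linear_tau]]]
      ball_tensor_nbhds bex_tensor_nbhds)

lemma homeomorphic_map_id_iff:
  "homeomorphic_map
     (tensor_shriek_topology sA sB sAB tAB (cofinite_topology sA (*)) (cofinite_topology sB (*)))
     (cofinite_topology sAB mt) id \<longleftrightarrow>
   (\<forall>I\<in>FA. \<forall>J\<in>FB. \<exists>K\<in>FAB. K \<subseteq> tensor_nbhd sAB tAB I J)"
proof -
  have "\<forall>K\<in>FAB. \<exists>N\<in>tensor_nbhds sAB tAB FA FB. N \<subseteq> K"
    unfolding bex_tensor_nbhds
    using vimage_left_fin_codim_ideal vimage_right_fin_codim_ideal tensor_nbhd_vimages_subset by blast
  then show ?thesis
    unfolding tensor_shriek_topology_AB homeomorphic_map_id cofinite_topology_def[of sAB]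
    by (simp add: linear_topology_eq_iff[OF AB.linear_topology_base_fin_codim_ideals
          AB.linear_topology_base_tensor_nbhds[OF A.linear_topology_base_fin_codim_ideals
            B.linear_topology_base_fin_codim_ideals]] ball_tensor_nbhds)
qed

lemma tau_tensor_nbhd_subset_if_stable:
  assumes "\<tau> ` tensor_sub sBA tBA UNIV I \<subseteq> tensor_sub sAB tAB I UNIV"
    and "\<tau> ` tensor_sub sBA tBA J UNIV \<subseteq> tensor_sub sAB tAB UNIV J"
  shows "\<tau> ` tensor_nbhd sBA tBA J I \<subseteq> tensor_nbhd sAB tAB I J"
proof
  fix z assume "z \<in> \<tau> ` tensor_nbhd sBA tBA J I"
  then obtain u v where "u \<in> tensor_sub sBA tBA J UNIV" "v \<in> tensor_sub sBA tBA UNIV I"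
    and z: "z = \<tau> v + \<tau> u"
    using module_hom.add[OF module_hom_linearI[OF linear_tau]] by (auto simp: set_plus_def add.commute)
  then have "\<tau> v \<in> tensor_sub sAB tAB I UNIV" "\<tau> u \<in> tensor_sub sAB tAB UNIV J"
    using assms by blast+
  then show "z \<in> tensor_nbhd sAB tAB I J"
    unfolding z by (rule set_plus_intro)
qed

lemma twisting_condition_if_stable_bases:
  assumes "\<exists>\<I> \<J>. \<I> \<subseteq> FA \<and> (\<forall>I'\<in>FA. \<exists>I\<in>\<I>. I \<subseteq> I') \<and> \<J> \<subseteq> FB \<and> (\<forall>J'\<in>FB. \<exists>J\<in>\<J>. J \<subseteq> J') \<and>
      (\<forall>I\<in>\<I>. \<tau> ` tensor_sub sBA tBA UNIV I \<subseteq> tensor_sub sAB tAB I UNIV) \<and>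
      (\<forall>J\<in>\<J>. \<tau> ` tensor_sub sBA tBA J UNIV \<subseteq> tensor_sub sAB tAB UNIV J)"
  shows "\<forall>I\<in>FA. \<forall>J\<in>FB. \<exists>J'\<in>FB. \<exists>I'\<in>FA. \<tau> ` tensor_nbhd sBA tBA J' I' \<subseteq> tensor_nbhd sAB tAB I J"
proof (intro ballI)
  fix I J assume "I \<in> FA" "J \<in> FB"
  obtain \<I> \<J> where "\<I> \<subseteq> FA" "\<forall>I'\<in>FA. \<exists>I\<in>\<I>. I \<subseteq> I'" "\<J> \<subseteq> FB" "\<forall>J'\<in>FB. \<exists>J\<in>\<J>. J \<subseteq> J'"
    and stable_I: "\<forall>I\<in>\<I>. \<tau> ` tensor_sub sBA tBA UNIV I \<subseteq> tensor_sub sAB tAB I UNIV"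
    and stable_J: "\<forall>J\<in>\<J>. \<tau> ` tensor_sub sBA tBA J UNIV \<subseteq> tensor_sub sAB tAB UNIV J"
    using assms by (elim exE conjE)
  obtain I0 where "I0 \<in> \<I>" "I0 \<subseteq> I"
    using bspec[OF \<open>\<forall>I'\<in>FA. \<exists>I\<in>\<I>. I \<subseteq> I'\<close> \<open>I \<in> FA\<close>] by blast
  obtain J0 where "J0 \<in> \<J>" "J0 \<subseteq> J"
    using bspec[OF \<open>\<forall>J'\<in>FB. \<exists>J\<in>\<J>. J \<subseteq> J'\<close> \<open>J \<in> FB\<close>] by blast
  have "\<tau> ` tensor_nbhd sBA tBA J0 I0 \<subseteq> tensor_nbhd sAB tAB I0 J0"
    by (rule tau_tensor_nbhd_subset_if_stable[OF bspec[OF stable_I \<open>I0 \<in> \<I>\<close>]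
          bspec[OF stable_J \<open>J0 \<in> \<J>\<close>]])
  also have "\<dots> \<subseteq> tensor_nbhd sAB tAB I J"
    using \<open>I0 \<subseteq> I\<close> \<open>J0 \<subseteq> J\<close> by (rule AB.tensor_nbhd_mono)
  finally have "\<tau> ` tensor_nbhd sBA tBA J0 I0 \<subseteq> tensor_nbhd sAB tAB I J" .
  moreover have "I0 \<in> FA" "J0 \<in> FB"
    using subsetD[OF \<open>\<I> \<subseteq> FA\<close> \<open>I0 \<in> \<I>\<close>] subsetD[OF \<open>\<J> \<subseteq> FB\<close> \<open>J0 \<in> \<J>\<close>] .
  ultimately show "\<exists>J'\<in>FB. \<exists>I'\<in>FA. \<tau> ` tensor_nbhd sBA tBA J' I' \<subseteq> tensor_nbhd sAB tAB I J"
    by (intro bexI[of _ J0] bexI[of _ I0])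
qed

end

theorem proposition3p4:
  fixes sA :: "'k::field \<Rightarrow> 'a::ring_1 \<Rightarrow> 'a"
    and sB :: "'k \<Rightarrow> 'b::ring_1 \<Rightarrow> 'b"
    and sAB :: "'k \<Rightarrow> 'ab::ab_group_add \<Rightarrow> 'ab"
    and sBA :: "'k \<Rightarrow> 'ba::ab_group_add \<Rightarrow> 'ba"
    and tAB :: "'a \<Rightarrow> 'b \<Rightarrow> 'ab"
    and tBA :: "'b \<Rightarrow> 'a \<Rightarrow> 'ba"
    and \<tau> :: "'ba \<Rightarrow> 'ab"
    and mt :: "'ab \<Rightarrow> 'ab \<Rightarrow> 'ab"
  assumes "k_algebra sA" and "k_algebra sB"
    and "is_tensor_product sA sB sAB tAB"
    and "is_tensor_product sB sA sBA tBA"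
    and "is_twisting_map sBA sAB tAB tBA \<tau> mt"
  shows "(continuous_map
           (tensor_shriek_topology sB sA sBA tBA (cofinite_topology sB (*)) (cofinite_topology sA (*)))
           (tensor_shriek_topology sA sB sAB tAB (cofinite_topology sA (*)) (cofinite_topology sB (*)))
           \<tau>
         \<longleftrightarrow> homeomorphic_map
           (tensor_shriek_topology sA sB sAB tAB (cofinite_topology sA (*)) (cofinite_topology sB (*)))
           (cofinite_topology sAB mt) id) \<and>
        ((\<exists>\<I> \<J>. \<I> \<subseteq> fin_codim_ideals sA (*) \<and> (\<forall>I'\<in>fin_codim_ideals sA (*). \<exists>I\<in>\<I>. I \<subseteq> I') \<and>
             \<J> \<subseteq> fin_codim_ideals sB (*) \<and> (\<forall>J'\<in>fin_codim_ideals sB (*). \<exists>J\<in>\<J>. J \<subseteq> J') \<and>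
             (\<forall>I\<in>\<I>. \<tau> ` tensor_sub sBA tBA UNIV I \<subseteq> tensor_sub sAB tAB I UNIV) \<and>
             (\<forall>J\<in>\<J>. \<tau> ` tensor_sub sBA tBA J UNIV \<subseteq> tensor_sub sAB tAB UNIV J))
         \<longrightarrow> continuous_map
           (tensor_shriek_topology sB sA sBA tBA (cofinite_topology sB (*)) (cofinite_topology sA (*)))
           (tensor_shriek_topology sA sB sAB tAB (cofinite_topology sA (*)) (cofinite_topology sB (*)))
           \<tau>)"
proof -
  interpret twisted_tensor_algebra sA sB sAB sBA tAB tBA \<tau> mt
    by (rule twisted_tensor_algebra.intro) fact+
  have "(\<forall>I\<in>FA. \<forall>J\<in>FB. \<exists>J'\<in>FB. \<exists>I'\<in>FA. \<tau> ` tensor_nbhd sBA tBA J' I' \<subseteq> tensor_nbhd sAB tAB I J) \<longleftrightarrow>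
      (\<forall>I\<in>FA. \<forall>J\<in>FB. \<exists>K\<in>FAB. K \<subseteq> tensor_nbhd sAB tAB I J)"
    by (simp only: ex_fin_codim_ideal_below_tensor_nbhd_iff cong: ball_cong)
  then show ?thesis
    unfolding continuous_map_twisting_iff homeomorphic_map_id_iff
    by (intro conjI impI twisting_condition_if_stable_bases)
qed

end
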